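(* Let $t_f>0$. Let $b$ be a box in an octree and let $c\in b$ be a QBX center with expansion radius $r_c>0$ that is suspended in $b$. Then the closed cube $\{x\in\mathbb R^3:|x-c|_\infty\le 4\sqrt3\,r_c/t_f\}$ contains the $2$-near neighborhood of $b$.
   Context: An octree is a rooted tree of axis-aligned closed cubes ("boxes") in $\mathbb R^3$. For a box $b$, $|b|$ denotes its $\ell^\infty$ radius (half side length) and $c_b$ its center. The $k$-near neighborhood of $b$ is the closed cube $\{x:|x-c_b|_\infty\le|b|(1+2k)\}$. For target confinement factor $t_f$, $\mathsf{TCR}(b)$ is the closed Euclidean ball of radius $\sqrt3|b|(1+t_f)$ centered at $c_b$. A center $c\in b$ with radius $r_c$ is suspended in $b$ if for every one of the eight cubes $b'$ of radius $|b|/2$ obtained by bisecting $b$ along each axis that contains $c$, the closed Euclidean ball $\{x:|x-c|_2\le r_c\}$ is not contained in $\mathsf{TCR}(b')$. *)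

theory Defs
  imports "HOL-Analysis.Analysis"
begin

definition box :: "real^3 \<Rightarrow> real \<Rightarrow> (real^3) set" where
  "box cb rb = {x. infnorm (x - cb) \<le> rb}"

definition near_nbhd :: "real^3 \<Rightarrow> real \<Rightarrow> real \<Rightarrow> (real^3) set" where
  "near_nbhd cb rb k = {x. infnorm (x - cb) \<le> rb * (1 + 2 * k)}"

definition TCR :: "real \<Rightarrow> real^3 \<Rightarrow> real \<Rightarrow> (real^3) set" where
  "TCR tf cb rb = cball cb (sqrt 3 * rb * (1 + tf))"

definition child_centers :: "real^3 \<Rightarrow> real \<Rightarrow> (real^3) set" where
  "child_centers cb rb = {cb + (rb / 2) *\<^sub>R s | s. \<forall>i. s $ i = 1 \<or> s $ i = -1}"

definition suspended :: "real \<Rightarrow> real^3 \<Rightarrow> real \<Rightarrow> real^3 \<Rightarrow> real \<Rightarrow> bool" where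
  "suspended tf cb rb c rc \<longleftrightarrow>
     c \<in> box cb rb \<and>
     (\<forall>cb' \<in> child_centers cb rb. c \<in> box cb' (rb / 2) \<longrightarrow>
        \<not> (cball c rc \<subseteq> TCR tf cb' (rb / 2)))"

end

theory Submission
  imports Defs
begin

text \<open>
  The child box containing \<open>c\<close> has centre within Euclidean distance \<open>\<surd>3 |b|/2\<close> of \<open>c\<close>.
  Since the ball of radius \<open>r\<^sub>c\<close> around \<open>c\<close> is not contained in that child's target
  confinement region of radius \<open>\<surd>3 (|b|/2)(1 + t\<^sub>f)\<close>, we get
  \<open>r\<^sub>c + \<surd>3 |b|/2 > \<surd>3 (|b|/2)(1 + t\<^sub>f)\<close>, i.e. \<open>|b| < 2 r\<^sub>c / (\<surd>3 t\<^sub>f)\<close>.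
  Every point of the 2-near neighborhood is within \<open>\<infinity>\<close>-distance \<open>5|b| + |b| = 6|b|\<close>
  of \<open>c\<close>, and \<open>6 \<cdot> 2 r\<^sub>c / (\<surd>3 t\<^sub>f) = 4\<surd>3 r\<^sub>c / t\<^sub>f\<close>.
\<close>

lemma infnorm_le_cart:
  fixes x :: "real^'n"
  assumes "\<And>i. \<bar>x$i\<bar> \<le> e"
  shows "infnorm x \<le> e"
  unfolding infnorm_cart
  by (rule cSup_least) (use assms in auto)

lemma box_imp_in_child_box:
  assumes "c \<in> box cb rb"
  obtains cb' where "cb' \<in> child_centers cb rb" and "c \<in> box cb' (rb / 2)"
proof
  define s :: "real^3" where "s = (\<chi> i. if c$i \<ge> cb$i then 1 else -1)"
  show "cb + (rb / 2) *\<^sub>R s \<in> child_centers cb rb"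
    unfolding child_centers_def by (rule CollectI, rule exI[of _ s]) (auto simp: s_def)
  have c_cb: "\<bar>(c - cb)$i\<bar> \<le> rb" for i
    using component_le_infnorm_cart[of "c - cb" i] assms by (simp add: box_def)
  have "\<bar>(c - (cb + (rb / 2) *\<^sub>R s))$i\<bar> \<le> rb / 2" for i
    using c_cb[of i] by (auto simp: s_def abs_if split: if_splits)
  then have "infnorm (c - (cb + (rb / 2) *\<^sub>R s)) \<le> rb / 2"
    by (rule infnorm_le_cart)
  then show "c \<in> box (cb + (rb / 2) *\<^sub>R s) (rb / 2)"
    by (simp add: box_def)
qed

lemma box_dist_center_le:
  assumes "c \<in> box cb rb"
  shows "dist c cb \<le> sqrt 3 * rb"
proof -
  have "dist c cb \<le> sqrt 3 * infnorm (c - cb)"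
    using norm_le_infnorm[of "c - cb"] by (simp add: dist_norm)
  also have "\<dots> \<le> sqrt 3 * rb"
    using assms by (simp add: box_def mult_left_mono)
  finally show ?thesis .
qed

lemma suspended_radius_lower_bound:
  assumes "suspended tf cb rb c rc" and "rc \<ge> 0"
  shows "sqrt 3 * rb * tf < 2 * rc"
proof -
  from assms(1) have "c \<in> box cb rb" by (simp add: suspended_def)
  then obtain cb' where cb': "cb' \<in> child_centers cb rb" "c \<in> box cb' (rb / 2)"
    by (rule box_imp_in_child_box)
  with assms(1) have "\<not> cball c rc \<subseteq> cball cb' (sqrt 3 * (rb / 2) * (1 + tf))"
    unfolding suspended_def TCR_def by blast
  then have "sqrt 3 * (rb / 2) * (1 + tf) < dist c cb' + rc"
    using assms(2) by (simp add: cball_subset_cball_iff)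
  moreover have "dist c cb' \<le> sqrt 3 * (rb / 2)"
    using cb'(2) by (rule box_dist_center_le)
  ultimately show ?thesis by (simp add: algebra_simps)
qed

lemma near_nbhd_subset_infnorm_cube:
  assumes "c \<in> box cb rb"
  shows "near_nbhd cb rb k \<subseteq> {x. infnorm (x - c) \<le> rb * (2 + 2 * k)}"
proof
  fix x assume "x \<in> near_nbhd cb rb k"
  then have "infnorm (x - cb) \<le> rb * (1 + 2 * k)" by (simp add: near_nbhd_def)
  moreover have "infnorm (cb - c) \<le> rb"
    using assms by (simp add: box_def infnorm_sub)
  moreover have "infnorm (x - c) \<le> infnorm (x - cb) + infnorm (cb - c)"
    using infnorm_triangle[of "x - cb" "cb - c"] by simp
  ultimately show "x \<in> {x. infnorm (x - c) \<le> rb * (2 + 2 * k)}"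
    by (simp add: algebra_simps)
qed

theorem mainTheorem4:
  fixes tf rb rc :: real and cb c :: "real^3"
  assumes "tf > 0" and "rb > 0" and "rc > 0"
    and "c \<in> box cb rb"
    and "suspended tf cb rb c rc"
  shows "near_nbhd cb rb 2 \<subseteq> {x. infnorm (x - c) \<le> 4 * sqrt 3 * rc / tf}"
proof -
  have "sqrt 3 * (sqrt 3 * rb * tf) \<le> sqrt 3 * (2 * rc)"
    using suspended_radius_lower_bound[OF assms(5)] assms(3) by simp
  then have "6 * rb * tf \<le> 4 * sqrt 3 * rc"
    by (simp add: algebra_simps)
  then have "rb * (2 + 2 * 2) \<le> 4 * sqrt 3 * rc / tf"
    using assms(1) by (simp add: pos_le_divide_eq)
  then show ?thesis
    using near_nbhd_subset_infnorm_cube[OF assms(4), of 2] by auto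
qed

end
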